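(* Suppose the ST problem for $(D_{SC},F,B)$ has a positive answer. Then there is a solution to it, which necessarily consists of paths $\pi(v)$, one starting at each source $v$ of $D_{SC}$, such that for every $i\in\mathcal U$ and $j\in I_i$ we have $V(\pi(u_{i,j}))\subseteq V(C_i)$.
   Context: Snow Team problem (ST): given a digraph $D=(\mathcal V,\mathcal A)$ whose underlying graph is connected, and $F:\mathcal V\to\{0,1\}$, $B:\mathcal V\to\mathbb N$, with $\mathbf k_B=\sum_vB(v)$: do there exist $\mathbf k_B$ directed walks, exactly $B(v)$ of which start at each $v$, such that, letting $H$ be the subgraph consisting of the vertices and arcs of these walks, all vertices of $F^{-1}(1)$ lie in one connected component of the underlying undirected graph of $H$? Such walks form a solution. Construction: $\mathcal U=\{1,\dots,n\}$, $\mathcal S=\{S_1,\dots,S_m\}$ with $S_t\subseteq\mathcal U$, $\bigcup_tS_t=\mathcal U$, and $1\le k\le m$. Write $S_t=\{x_1<\dots<x_{\ell(t)}\}$ and $I_i=\{j: i\in S_j\}$. The digraph $D_{SC}$ has vertices $u_i$ ($i\in\mathcal U$); $u_{i,j},u'_{i,j},v_{i,j},v'_{i,j}$ ($i\in\mathcal U$, $j\in I_i$); and $z,z_1,\dots,z_k$. Its arcs are those of the vertical paths $P_{i,j}=(u_{i,j},u_i,u'_{i,j},v_{i,j},v'_{i,j})$ ($i\in\mathcal U,j\in I_i$), of the horizontal paths $P^h_t=(z,v_{x_1,t},v_{x_2,t},\dots,v_{x_{\ell(t)},t})$ ($t\in\{1,\dots,m\}$, with $x_1<\dots<x_{\ell(t)}$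 the elements of $S_t$), and the arcs $(z_l,z)$ for $l=1,\dots,k$. The $i$-th element component $C_i$ is the subgraph induced by $\bigcup_{j\in I_i}V(P_{i,j})$. Set $F(v)=1$ for all vertices $v$, and $B(v)=1$ if $v$ is a source of $D_{SC}$ (i.e. $v\in\{u_{i,j}\}\cup\{z_1,\dots,z_k\}$) and $B(v)=0$ otherwise. Since $D_{SC}$ is acyclic, every solution consists of one directed path $\pi(v)$ starting at each source $v$. *)

theory Defs
  imports Main
begin

definition is_walk :: "'v set \<Rightarrow> ('v \<times> 'v) set \<Rightarrow> 'v list \<Rightarrow> bool" where
  "is_walk V A p \<longleftrightarrow> p \<noteq> [] \<and> set p \<subseteq> V \<and> (\<forall>i. Suc i < length p \<longrightarrow> (p ! i, p ! Suc i) \<in> A)"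

definition walk_arcs :: "'v list \<Rightarrow> ('v \<times> 'v) set" where
  "walk_arcs p = set (zip p (tl p))"

text \<open>A family of walks: W v r is the r-th walk starting at v (r < B v), so exactly
  B v walks start at v, k_B walks in total.\<close>
definition H_verts :: "'v set \<Rightarrow> ('v \<Rightarrow> nat) \<Rightarrow> ('v \<Rightarrow> nat \<Rightarrow> 'v list) \<Rightarrow> 'v set" where
  "H_verts V B W = (\<Union>v\<in>V. \<Union>r\<in>{..<B v}. set (W v r))"

definition H_arcs :: "'v set \<Rightarrow> ('v \<Rightarrow> nat) \<Rightarrow> ('v \<Rightarrow> nat \<Rightarrow> 'v list) \<Rightarrow> ('v \<times> 'v) set" where
  "H_arcs V B W = (\<Union>v\<in>V. \<Union>r\<in>{..<B v}. walk_arcs (W v r))"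

definition st_solution ::
  "'v set \<Rightarrow> ('v \<times> 'v) set \<Rightarrow> ('v \<Rightarrow> nat) \<Rightarrow> ('v \<Rightarrow> nat) \<Rightarrow> ('v \<Rightarrow> nat \<Rightarrow> 'v list) \<Rightarrow> bool" where
  "st_solution V A F B W \<longleftrightarrow>
     (\<forall>v\<in>V. \<forall>r<B v. is_walk V A (W v r) \<and> hd (W v r) = v) \<and>
     (\<forall>x\<in>V. \<forall>y\<in>V. F x = 1 \<and> F y = 1 \<longrightarrow>
        x \<in> H_verts V B W \<and> y \<in> H_verts V B W \<and>
        (x, y) \<in> (H_arcs V B W \<union> (H_arcs V B W)\<inverse>)\<^sup>*)"

datatype vtx = Ui nat | Uij nat nat | Uij' nat nat | Vij nat nat | Vij' nat nat | Zc | Zl nat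

definition idx_I :: "nat \<Rightarrow> (nat \<Rightarrow> nat set) \<Rightarrow> nat \<Rightarrow> nat set" where
  "idx_I m S i = {j \<in> {1..m}. i \<in> S j}"

definition vert_path :: "nat \<Rightarrow> nat \<Rightarrow> vtx list" where
  "vert_path i j = [Uij i j, Ui i, Uij' i j, Vij i j, Vij' i j]"

definition horiz_path :: "(nat \<Rightarrow> nat set) \<Rightarrow> nat \<Rightarrow> vtx list" where
  "horiz_path S t = Zc # map (\<lambda>x. Vij x t) (sorted_list_of_set (S t))"

definition dsc_verts :: "nat \<Rightarrow> nat \<Rightarrow> (nat \<Rightarrow> nat set) \<Rightarrow> nat \<Rightarrow> vtx set" where
  "dsc_verts n m S k =
     Ui ` {1..n} \<union>
     (\<Union>i\<in>{1..n}. \<Union>j\<in>idx_I m S i. {Uij i j, Uij' i j, Vij i j, Vij' i j}) \<union>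
     {Zc} \<union> Zl ` {1..k}"

definition dsc_arcs :: "nat \<Rightarrow> nat \<Rightarrow> (nat \<Rightarrow> nat set) \<Rightarrow> nat \<Rightarrow> (vtx \<times> vtx) set" where
  "dsc_arcs n m S k =
     (\<Union>i\<in>{1..n}. \<Union>j\<in>idx_I m S i. walk_arcs (vert_path i j)) \<union>
     (\<Union>t\<in>{1..m}. walk_arcs (horiz_path S t)) \<union>
     (\<lambda>l. (Zl l, Zc)) ` {1..k}"

definition comp_C :: "nat \<Rightarrow> (nat \<Rightarrow> nat set) \<Rightarrow> nat \<Rightarrow> vtx set" where
  "comp_C m S i = (\<Union>j\<in>idx_I m S i. set (vert_path i j))"

definition dsc_sources :: "nat \<Rightarrow> nat \<Rightarrow> (nat \<Rightarrow> nat set) \<Rightarrow> nat \<Rightarrow> vtx set" where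
  "dsc_sources n m S k = (\<Union>i\<in>{1..n}. (\<lambda>j. Uij i j) ` idx_I m S i) \<union> Zl ` {1..k}"

definition dsc_F :: "vtx \<Rightarrow> nat" where
  "dsc_F v = 1"

definition dsc_B :: "nat \<Rightarrow> nat \<Rightarrow> (nat \<Rightarrow> nat set) \<Rightarrow> nat \<Rightarrow> vtx \<Rightarrow> nat" where
  "dsc_B n m S k v = (if v \<in> dsc_sources n m S k then 1 else 0)"

end

theory Submission
  imports Defs
begin

text \<open>Every walk from u_{a,j} is forced through u_a to some u'_{a,t}, and since each u'_{a,t}
  has to be visited, j \<mapsto> t is a bijection of I_a. Consequently a solution can use an arc of a
  horizontal path P^h_t only if it also uses all earlier arcs of P^h_t: otherwise some v_{a,t}
  would be entered from u'_{a,t} both by the walk continuing along P^h_t and by the walk reaching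
  v'_{a,t}, and by the bijection these are one and the same walk. Hence the connected component
  of z meets the element component C_a only if a lies in some S_t whose path P^h_t is entered from
  z, by the walk of some z_l; as every vertex lies in that component, every element is covered in
  this way. Letting each u_{a,j} walk down P_{a,j} and each such z_l walk along all of P^h_t
  gives a solution of the required form.\<close>

lemma walk_arcs_conv_nth:
  "(x, y) \<in> walk_arcs p \<longleftrightarrow> (\<exists>q. Suc q < length p \<and> p ! q = x \<and> p ! Suc q = y)"
  unfolding walk_arcs_def in_set_zip by (auto simp: nth_tl) (rule_tac x = n in exI; simp)

lemma walk_arcs_subset_Times: "walk_arcs p \<subseteq> set p \<times> set (tl p)"
  unfolding walk_arcs_def by (auto dest: set_zip_leftD set_zip_rightD)

lemma walk_arcs_Cons: "p \<noteq> [] \<Longrightarrow> walk_arcs (x # p) = insert (x, hd p) (walk_arcs p)"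
  unfolding walk_arcs_def by (cases p) auto

lemma distinct_walk_arcs_into:
  assumes "distinct p" "Suc q < length p" "(z, p ! Suc q) \<in> walk_arcs p"
  shows "z = p ! q"
proof -
  obtain r where r: "Suc r < length p" "p ! r = z" "p ! Suc r = p ! Suc q"
    using assms(3) unfolding walk_arcs_conv_nth by blast
  then have "r = q" using nth_eq_iff_index_eq[OF assms(1), of "Suc r" "Suc q"] assms(2) by simp
  with r show ?thesis by simp
qed

lemma is_walk_iff: "is_walk V A p \<longleftrightarrow> p \<noteq> [] \<and> set p \<subseteq> V \<and> walk_arcs p \<subseteq> A"
  unfolding is_walk_def subset_iff split_paired_All walk_arcs_conv_nth by blast

lemma is_walk_arc_into:
  "is_walk V A p \<Longrightarrow> 0 < q \<Longrightarrow> q < length p \<Longrightarrow> (p ! (q - 1), p ! q) \<in> A"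
  unfolding is_walk_def by (cases q) auto

lemma rtrancl_walk_arcs_hd: "p \<noteq> [] \<Longrightarrow> x \<in> set p \<Longrightarrow> (hd p, x) \<in> (walk_arcs p)\<^sup>*"
proof (induction p)
  case Nil
  then show ?case by simp
next
  case (Cons a p)
  show ?case
  proof (cases "x = a")
    case False
    then have "p \<noteq> []" "x \<in> set p" using Cons.prems by auto
    then have "(hd p, x) \<in> (walk_arcs p)\<^sup>*" by (rule Cons.IH)
    moreover have "walk_arcs (a # p) = insert (a, hd p) (walk_arcs p)"
      using walk_arcs_Cons[OF \<open>p \<noteq> []\<close>] .
    ultimately show ?thesis
      using rtrancl_mono[of "walk_arcs p" "walk_arcs (a # p)"]
        converse_rtrancl_into_rtrancl[of a "hd p" "walk_arcs (a # p)" x] by auto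
  qed simp
qed

lemma sym_closure_rtrancl_swap: "(x, y) \<in> (R \<union> R\<inverse>)\<^sup>* \<Longrightarrow> (y, x) \<in> (R \<union> R\<inverse>)\<^sup>*"
  using sym_rtrancl[OF sym_Un_converse] by (rule symD)

lemma sym_closure_rtrancl_invariant:
  assumes "(x, y) \<in> (R \<union> R\<inverse>)\<^sup>*" and "\<And>a b. (a, b) \<in> R \<Longrightarrow> a \<in> G \<longleftrightarrow> b \<in> G"
    and "x \<in> G"
  shows "y \<in> G"
  using assms(1,3)
proof induction
  case (step y z)
  then show ?case using assms(2)[of y z] assms(2)[of z y] by blast
qed

lemma walk_arcs_subset_H_arcs: "v \<in> V \<Longrightarrow> r < B v \<Longrightarrow> walk_arcs (W v r) \<subseteq> H_arcs V B W"
  unfolding H_arcs_def by blast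

lemma set_subset_H_verts: "v \<in> V \<Longrightarrow> r < B v \<Longrightarrow> set (W v r) \<subseteq> H_verts V B W"
  unfolding H_verts_def by blast

lemma st_solutionI_hub:
  assumes walks: "\<forall>v\<in>V. \<forall>r<B v. is_walk V A (W v r) \<and> hd (W v r) = v"
    and hub: "\<And>x. x \<in> V \<Longrightarrow> F x = 1 \<Longrightarrow>
      x \<in> H_verts V B W \<and> (z, x) \<in> (H_arcs V B W \<union> (H_arcs V B W)\<inverse>)\<^sup>*"
  shows "st_solution V A F B W"
  unfolding st_solution_def
proof (rule conjI[OF walks], intro ballI impI)
  fix x y assume "x \<in> V" "y \<in> V" "F x = 1 \<and> F y = 1"
  with hub[of x] hub[of y] show "x \<in> H_verts V B W \<and> y \<in> H_verts V B W \<and>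
      (x, y) \<in> (H_arcs V B W \<union> (H_arcs V B W)\<inverse>)\<^sup>*"
    by (meson rtrancl_trans sym_closure_rtrancl_swap)
qed

lemma walk_arcs_vert_path:
  "walk_arcs (vert_path i j) = {(Uij i j, Ui i), (Ui i, Uij' i j), (Uij' i j, Vij i j), (Vij i j, Vij' i j)}"
  by (auto simp: walk_arcs_def vert_path_def)

lemma set_tl_horiz_path: "set (tl (horiz_path S t)) = (\<lambda>a. Vij a t) ` set (sorted_list_of_set (S t))"
  by (simp add: horiz_path_def)

lemma set_horiz_path: "finite (S t) \<Longrightarrow> set (horiz_path S t) = insert Zc ((\<lambda>a. Vij a t) ` S t)"
  by (simp add: horiz_path_def)

lemma distinct_horiz_path: "distinct (horiz_path S t)"
  by (auto simp: horiz_path_def distinct_map inj_on_def)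

lemma dsc_arcs_cases:
  assumes "(x, y) \<in> dsc_arcs n m S k"
  obtains (vertical) i j where "(x, y) \<in> walk_arcs (vert_path i j)"
  | (horizontal) t a where "t \<in> {1..m}" "(x, y) \<in> walk_arcs (horiz_path S t)" "y = Vij a t"
  | (start) l where "x = Zl l" "y = Zc"
  using assms walk_arcs_subset_Times[of "horiz_path S _"] unfolding dsc_arcs_def set_tl_horiz_path
  by blast

lemma dsc_arcs_into_source: "(z, Uij i j) \<notin> dsc_arcs n m S k" "(z, Zl l) \<notin> dsc_arcs n m S k"
  by (auto elim: dsc_arcs_cases simp: walk_arcs_vert_path)

lemma dsc_arcs_into_Ui: "(z, Ui i) \<in> dsc_arcs n m S k \<Longrightarrow> \<exists>j. z = Uij i j"
  by (auto elim: dsc_arcs_cases simp: walk_arcs_vert_path)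

lemma dsc_arcs_into_Uij': "(z, Uij' i j) \<in> dsc_arcs n m S k \<Longrightarrow> z = Ui i"
  by (auto elim: dsc_arcs_cases simp: walk_arcs_vert_path)

lemma dsc_arcs_into_Vij': "(z, Vij' i j) \<in> dsc_arcs n m S k \<Longrightarrow> z = Vij i j"
  by (auto elim: dsc_arcs_cases simp: walk_arcs_vert_path)

lemma dsc_arcs_into_Zc: "(z, Zc) \<in> dsc_arcs n m S k \<Longrightarrow> \<exists>l. z = Zl l"
  by (auto elim: dsc_arcs_cases simp: walk_arcs_vert_path)

lemma dsc_arcs_into_Vij:
  "(z, Vij a t) \<in> dsc_arcs n m S k \<Longrightarrow> z = Uij' a t \<or> (z, Vij a t) \<in> walk_arcs (horiz_path S t)"
  by (auto elim: dsc_arcs_cases simp: walk_arcs_vert_path)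

section \<open>The shape of an arbitrary solution\<close>

locale dsc_solution =
  fixes n m k :: nat and S :: "nat \<Rightarrow> nat set" and W :: "vtx \<Rightarrow> nat \<Rightarrow> vtx list"
  assumes S_sub: "\<forall>t\<in>{1..m}. S t \<subseteq> {1..n}"
    and sol: "st_solution (dsc_verts n m S k) (dsc_arcs n m S k) dsc_F (dsc_B n m S k) W"
begin

abbreviation "V \<equiv> dsc_verts n m S k"
abbreviation "A \<equiv> dsc_arcs n m S k"
abbreviation "B \<equiv> dsc_B n m S k"
abbreviation "src \<equiv> dsc_sources n m S k"
abbreviation "H \<equiv> H_arcs V B W"
abbreviation \<pi> :: "vtx \<Rightarrow> vtx list" where "\<pi> v \<equiv> W v 0"

lemma finite_S: "t \<in> {1..m} \<Longrightarrow> finite (S t)"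
  using S_sub finite_subset by blast

lemma sources_subset: "src \<subseteq> V"
  unfolding dsc_sources_def dsc_verts_def by auto

lemma less_B_iff: "r < B v \<longleftrightarrow> v \<in> src \<and> r = 0"
  by (simp add: dsc_B_def)

lemma is_walk_source: "v \<in> src \<Longrightarrow> is_walk V A (\<pi> v) \<and> hd (\<pi> v) = v"
proof -
  assume "v \<in> src"
  then have "v \<in> V" "0 < B v" using sources_subset less_B_iff by auto
  then show ?thesis using sol unfolding st_solution_def by simp
qed

lemma nth_0_walk: "v \<in> src \<Longrightarrow> \<pi> v ! 0 = v"
proof -
  assume "v \<in> src"
  then have "\<pi> v \<noteq> []" "hd (\<pi> v) = v" using is_walk_source unfolding is_walk_def by auto
  then show ?thesis by (metis hd_conv_nth)
qed

lemma walk_arc_into: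
  "v \<in> src \<Longrightarrow> 0 < p \<Longrightarrow> p < length (\<pi> v) \<Longrightarrow> (\<pi> v ! (p - 1), \<pi> v ! p) \<in> A"
  using is_walk_source is_walk_arc_into by blast

lemma walk_arc_in_H:
  "v \<in> src \<Longrightarrow> 0 < p \<Longrightarrow> p < length (\<pi> v) \<Longrightarrow> (\<pi> v ! (p - 1), \<pi> v ! p) \<in> H"
proof -
  assume "v \<in> src" "0 < p" "p < length (\<pi> v)"
  then have "(\<pi> v ! (p - 1), \<pi> v ! p) \<in> walk_arcs (\<pi> v)"
    unfolding walk_arcs_conv_nth by (intro exI[of _ "p - 1"]) simp
  with \<open>v \<in> src\<close> show ?thesis
    using walk_arcs_subset_H_arcs[of v V 0 B W] sources_subset less_B_iff by auto
qed

lemma H_arcE: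
  assumes "(x, y) \<in> H"
  obtains v p where "v \<in> src" "Suc p < length (\<pi> v)" "\<pi> v ! p = x" "\<pi> v ! Suc p = y"
proof -
  obtain v r where "r < B v" "(x, y) \<in> walk_arcs (W v r)"
    using assms unfolding H_arcs_def by blast
  then show thesis using that less_B_iff unfolding walk_arcs_conv_nth by auto
qed

lemma H_arc_in_A: "(x, y) \<in> H \<Longrightarrow> (x, y) \<in> A"
proof (elim H_arcE)
  fix v p assume "v \<in> src" "Suc p < length (\<pi> v)" "\<pi> v ! p = x" "\<pi> v ! Suc p = y"
  then show ?thesis using walk_arc_into[of v "Suc p"] by simp
qed

lemma solution_connected:
  assumes "x \<in> V" "y \<in> V"
  shows "x \<in> H_verts V B W" "(x, y) \<in> (H \<union> H\<inverse>)\<^sup>*"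
  using sol assms unfolding st_solution_def dsc_F_def by simp_all

lemma vertex_on_walk:
  assumes "x \<in> V"
  obtains v p where "v \<in> src" "p < length (\<pi> v)" "\<pi> v ! p = x"
proof -
  obtain v r where "r < B v" "x \<in> set (W v r)"
    using solution_connected(1)[OF assms assms] unfolding H_verts_def by blast
  then show thesis using that less_B_iff unfolding in_set_conv_nth by auto
qed

lemma walk_index_no_arc_into:
  assumes "v \<in> src" "p < length (\<pi> v)" "\<And>z. (z, \<pi> v ! p) \<notin> A"
  shows "p = 0"
  using walk_arc_into[OF assms(1) _ assms(2)] assms(3) by blast

lemma walk_index_nonsource: "v \<in> src \<Longrightarrow> \<pi> v ! p = x \<Longrightarrow> x \<notin> src \<Longrightarrow> 0 < p"
  using nth_0_walk by (cases p) auto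

lemma nonsources: "Ui i \<notin> src" "Uij' i j \<notin> src" "Vij i j \<notin> src" "Vij' i j \<notin> src" "Zc \<notin> src"
  by (auto simp: dsc_sources_def)

lemma walk_index_Zc:
  assumes v: "v \<in> src" and p: "p < length (\<pi> v)" "\<pi> v ! p = Zc"
  shows "p = 1 \<and> (\<exists>l. v = Zl l)"
proof -
  have "0 < p" using walk_index_nonsource[OF v p(2)] nonsources by blast
  then have "(\<pi> v ! (p - 1), Zc) \<in> A" using walk_arc_into[OF v _ p(1)] p(2) by simp
  then obtain l where l: "\<pi> v ! (p - 1) = Zl l" using dsc_arcs_into_Zc by blast
  then have "p - 1 = 0"
    using walk_index_no_arc_into[OF v, of "p - 1"] p(1) dsc_arcs_into_source by (simp add: less_imp_diff_less)
  with \<open>0 < p\<close> l show ?thesis using nth_0_walk[OF v] by auto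
qed

lemma walk_index_Ui:
  assumes v: "v \<in> src" and p: "p < length (\<pi> v)" "\<pi> v ! p = Ui a"
  shows "p = 1 \<and> (\<exists>j. v = Uij a j)"
proof -
  have "0 < p" using walk_index_nonsource[OF v p(2)] nonsources by blast
  then have "(\<pi> v ! (p - 1), Ui a) \<in> A" using walk_arc_into[OF v _ p(1)] p(2) by simp
  then obtain j where j: "\<pi> v ! (p - 1) = Uij a j" using dsc_arcs_into_Ui by blast
  then have "p - 1 = 0"
    using walk_index_no_arc_into[OF v, of "p - 1"] p(1) dsc_arcs_into_source by (simp add: less_imp_diff_less)
  with \<open>0 < p\<close> j show ?thesis using nth_0_walk[OF v] by auto
qed

lemma walk_index_Uij':
  assumes v: "v \<in> src" and p: "p < length (\<pi> v)" "\<pi> v ! p = Uij' a t"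
  shows "p = 2 \<and> (\<exists>j. v = Uij a j)"
proof -
  have "0 < p" using walk_index_nonsource[OF v p(2)] nonsources by blast
  then have "(\<pi> v ! (p - 1), Uij' a t) \<in> A" using walk_arc_into[OF v _ p(1)] p(2) by simp
  then have "\<pi> v ! (p - 1) = Ui a" using dsc_arcs_into_Uij' by blast
  then have "p - 1 = 1 \<and> (\<exists>j. v = Uij a j)" using walk_index_Ui[OF v, of "p - 1"] p(1) by simp
  then show ?thesis by auto
qed

lemma walk_index_Vij_vertical:
  assumes v: "v \<in> src" and p: "p < length (\<pi> v)" "\<pi> v ! p = Vij a t"
    and not_horiz: "\<And>z. (z, Vij a t) \<in> walk_arcs (horiz_path S t) \<Longrightarrow> (z, Vij a t) \<notin> H"
  shows "p = 3 \<and> \<pi> v ! 2 = Uij' a t \<and> (\<exists>j. v = Uij a j)"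
proof -
  have "0 < p" using walk_index_nonsource[OF v p(2)] nonsources by blast
  then have "(\<pi> v ! (p - 1), Vij a t) \<in> A" "(\<pi> v ! (p - 1), Vij a t) \<in> H"
    using walk_arc_into[OF v _ p(1)] walk_arc_in_H[OF v _ p(1)] p(2) by auto
  then have "\<pi> v ! (p - 1) = Uij' a t"
    using dsc_arcs_into_Vij not_horiz by blast
  then have "p - 1 = 2 \<and> (\<exists>j. v = Uij a j)" using walk_index_Uij'[OF v, of "p - 1"] p(1) by simp
  with \<open>\<pi> v ! (p - 1) = Uij' a t\<close> show ?thesis by auto
qed

lemma src_Uij: "Uij a j \<in> src \<longleftrightarrow> a \<in> {1..n} \<and> j \<in> idx_I m S a"
  by (auto simp: dsc_sources_def)

lemma vert_path_subset: "a \<in> {1..n} \<Longrightarrow> j \<in> idx_I m S a \<Longrightarrow> set (vert_path a j) \<subseteq> V"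
  unfolding vert_path_def dsc_verts_def by auto

text \<open>Every u'_{a,t} must be visited, and only at the third vertex of a walk from some u_{a,j};
  as there are equally many of both, the third vertices of these walks are pairwise distinct.\<close>
lemma inj_on_third_vertex:
  assumes a: "a \<in> {1..n}"
  shows "inj_on (\<lambda>j. \<pi> (Uij a j) ! 2) (idx_I m S a)"
proof (rule eq_card_imp_inj_on)
  let ?I = "idx_I m S a" and ?g = "\<lambda>j. \<pi> (Uij a j) ! 2"
  show fin: "finite ?I" unfolding idx_I_def by simp
  have "Uij' a ` ?I \<subseteq> ?g ` ?I"
  proof
    fix x assume "x \<in> Uij' a ` ?I"
    then obtain t where t: "t \<in> ?I" "x = Uij' a t" by blast
    then have "x \<in> V" using vert_path_subset[OF a] by (auto simp: vert_path_def)
    then obtain v p where vp: "v \<in> src" "p < length (\<pi> v)" "\<pi> v ! p = x"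
      by (rule vertex_on_walk)
    with t walk_index_Uij' obtain j where "p = 2" "v = Uij a j" by blast
    with vp src_Uij show "x \<in> ?g ` ?I" by auto
  qed
  then have "card (Uij' a ` ?I) \<le> card (?g ` ?I)"
    by (intro card_mono finite_imageI fin)
  then have "card ?I \<le> card (?g ` ?I)"
    by (simp add: card_image inj_on_def)
  then show "card (?g ` ?I) = card ?I" using card_image_le[OF fin, of ?g] by simp
qed

lemma horiz_path_nth_Suc:
  assumes "t \<in> {1..m}" "Suc q < length (horiz_path S t)"
  obtains a where "a \<in> S t" "horiz_path S t ! Suc q = Vij a t"
proof -
  have "horiz_path S t ! Suc q \<in> set (tl (horiz_path S t))"
    using assms(2) by (simp add: nth_tl[symmetric])
  then show thesis
    using that finite_S[OF assms(1)] by (auto simp: set_tl_horiz_path)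
qed

text \<open>The crux: if the walk leaving v_{a,t} along P^h_t did not also enter it along P^h_t, it
  came down the vertical path through u'_{a,t}; so did the walk covering v'_{a,t}, and by
  injectivity of the third vertex the two walks coincide, which is impossible.\<close>
lemma H_horiz_arc_prev:
  assumes t: "t \<in> {1..m}" and q: "Suc (Suc q) < length (horiz_path S t)"
    and used: "(horiz_path S t ! Suc q, horiz_path S t ! Suc (Suc q)) \<in> H"
  shows "(horiz_path S t ! q, horiz_path S t ! Suc q) \<in> H"
proof (rule ccontr)
  let ?h = "horiz_path S t"
  assume unused: "(?h ! q, ?h ! Suc q) \<notin> H"
  obtain a where a: "a \<in> S t" "?h ! Suc q = Vij a t"
    using horiz_path_nth_Suc[OF t, of q] q by auto
  obtain b where b: "?h ! Suc (Suc q) = Vij b t"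
    using horiz_path_nth_Suc[OF t q] by auto
  have not_horiz: "(z, Vij a t) \<notin> H" if "(z, Vij a t) \<in> walk_arcs ?h" for z
    using distinct_walk_arcs_into[OF distinct_horiz_path, of q S t z] that unused a(2) q by auto
  have a_n: "a \<in> {1..n}" using S_sub t a(1) by blast
  have t_idx: "t \<in> idx_I m S a" using a(1) t unfolding idx_I_def by simp
  obtain v1 p1 where w1: "v1 \<in> src" "Suc p1 < length (\<pi> v1)"
      "\<pi> v1 ! p1 = Vij a t" "\<pi> v1 ! Suc p1 = Vij b t"
    using used a(2) b by (auto elim: H_arcE)
  then obtain j1 where j1: "p1 = 3" "\<pi> v1 ! 2 = Uij' a t" "v1 = Uij a j1"
    using walk_index_Vij_vertical[OF w1(1) _ w1(3) not_horiz] by auto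
  have "Vij' a t \<in> V" using vert_path_subset[OF a_n t_idx] by (simp add: vert_path_def)
  then obtain v2 p2 where w2: "v2 \<in> src" "p2 < length (\<pi> v2)" "\<pi> v2 ! p2 = Vij' a t"
    by (rule vertex_on_walk)
  then have "0 < p2" using walk_index_nonsource nonsources by blast
  then have "\<pi> v2 ! (p2 - 1) = Vij a t"
    using walk_arc_into[OF w2(1) _ w2(2)] w2(3) dsc_arcs_into_Vij' by metis
  then have "p2 - 1 = 3 \<and> \<pi> v2 ! 2 = Uij' a t \<and> (\<exists>j. v2 = Uij a j)"
    using walk_index_Vij_vertical[OF w2(1) _ _ not_horiz, of "p2 - 1"] w2(2) by (simp add: less_imp_diff_less)
  then obtain j2 where j2: "p2 = 4" "\<pi> v2 ! 2 = Uij' a t" "v2 = Uij a j2"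
    using \<open>0 < p2\<close> by auto
  have "j1 = j2"
    using inj_on_third_vertex[OF a_n] j1 j2 w1(1) w2(1) src_Uij unfolding inj_on_def by metis
  then have "Vij b t = Vij' a t"
    using w1(4) w2(3) j1 j2 by (simp add: numeral_eq_Suc)
  then show False by simp
qed

lemma H_horiz_arc_first:
  assumes t: "t \<in> {1..m}"
  shows "Suc q < length (horiz_path S t) \<Longrightarrow> (horiz_path S t ! q, horiz_path S t ! Suc q) \<in> H
    \<Longrightarrow> (horiz_path S t ! 0, horiz_path S t ! 1) \<in> H"
proof (induction q)
  case (Suc q)
  then show ?case using H_horiz_arc_prev[OF t] by simp
qed simp

definition used_horiz :: "nat \<Rightarrow> bool" where
  "used_horiz t \<longleftrightarrow> t \<in> {1..m} \<and> 1 < length (horiz_path S t) \<and> (Zc, horiz_path S t ! 1) \<in> H"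

lemma H_horiz_arc_used:
  assumes "t \<in> {1..m}" "(x, y) \<in> walk_arcs (horiz_path S t)" "(x, y) \<in> H"
  shows "used_horiz t"
proof -
  obtain q where "Suc q < length (horiz_path S t)"
      "(horiz_path S t ! q, horiz_path S t ! Suc q) \<in> H"
    using assms(2,3) walk_arcs_conv_nth by metis
  then show ?thesis
    using H_horiz_arc_first[OF assms(1)] assms(1) unfolding used_horiz_def
    by (simp add: horiz_path_def)
qed

definition covered :: "nat \<Rightarrow> bool" where
  "covered i \<longleftrightarrow> (\<exists>t. used_horiz t \<and> i \<in> S t)"

text \<open>Closed under the arcs of H, hence containing the whole component of z.\<close>
definition covered_part :: "vtx set" where
  "covered_part = {v. case v of Ui i \<Rightarrow> covered i | Uij i j \<Rightarrow> covered i | Uij' i j \<Rightarrow> covered i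
     | Vij i j \<Rightarrow> covered i | Vij' i j \<Rightarrow> covered i | Zc \<Rightarrow> True | Zl l \<Rightarrow> True}"

lemma H_arc_covered_part:
  assumes "(x, y) \<in> H"
  shows "x \<in> covered_part \<longleftrightarrow> y \<in> covered_part"
  using H_arc_in_A[OF assms]
proof (cases rule: dsc_arcs_cases)
  case (horizontal t a)
  have "used_horiz t" using H_horiz_arc_used[OF horizontal(1,2) assms] .
  moreover have "x \<in> set (horiz_path S t)" "y \<in> set (tl (horiz_path S t))"
    using subsetD[OF walk_arcs_subset_Times horizontal(2)] by simp_all
  ultimately show ?thesis
    using finite_S[OF horizontal(1)]
    by (auto simp: set_horiz_path set_tl_horiz_path covered_part_def covered_def)
qed (auto simp: walk_arcs_vert_path covered_part_def)

lemma Zc_covered_part: "Zc \<in> covered_part"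
  unfolding covered_part_def by simp

lemma every_element_covered: "i \<in> {1..n} \<Longrightarrow> covered i"
proof -
  assume "i \<in> {1..n}"
  then have "(Zc, Ui i) \<in> (H \<union> H\<inverse>)\<^sup>*"
    by (intro solution_connected) (auto simp: dsc_verts_def)
  then have "Ui i \<in> covered_part"
    using H_arc_covered_part Zc_covered_part by (rule sym_closure_rtrancl_invariant)
  then show ?thesis by (simp add: covered_part_def)
qed

lemma used_horiz_start:
  assumes "used_horiz t"
  obtains l where "Zl l \<in> src" "2 < length (\<pi> (Zl l))" "\<pi> (Zl l) ! 2 = horiz_path S t ! 1"
proof -
  have "(Zc, horiz_path S t ! 1) \<in> H" using assms unfolding used_horiz_def by blast
  then obtain v p where w: "v \<in> src" "Suc p < length (\<pi> v)" "\<pi> v ! p = Zc"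
      "\<pi> v ! Suc p = horiz_path S t ! 1"
    by (rule H_arcE)
  with walk_index_Zc[OF w(1)] obtain l where "p = 1" "v = Zl l" by fastforce
  with w that show thesis by (simp add: numeral_2_eq_2)
qed

end

section \<open>Rerouting a solution\<close>

text \<open>The original walk from z_l has third vertex v_{x,t} exactly when it used the first arc of
  P^h_t; the rerouted walk from z_l then runs along all of P^h_t.\<close>
definition canonical_walks ::
  "(nat \<Rightarrow> nat set) \<Rightarrow> (vtx \<Rightarrow> nat \<Rightarrow> vtx list) \<Rightarrow> vtx \<Rightarrow> nat \<Rightarrow> vtx list" where
  "canonical_walks S W v r = (case v of
       Uij i j \<Rightarrow> vert_path i j
     | Zl l \<Rightarrow> Zl l # (if 2 < length (W v 0)
                       then (case W v 0 ! 2 of Vij x t \<Rightarrow> horiz_path S t | _ \<Rightarrow> [Zc]) else [Zc])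
     | _ \<Rightarrow> [v])"

lemma canonical_walks_Uij [simp]: "canonical_walks S W (Uij i j) r = vert_path i j"
  by (simp add: canonical_walks_def)

context dsc_solution
begin

abbreviation \<pi>' :: "vtx \<Rightarrow> vtx list" where "\<pi>' v \<equiv> canonical_walks S W v 0"
abbreviation "H' \<equiv> H_arcs V B (canonical_walks S W)"
abbreviation "E' \<equiv> (H' \<union> H'\<inverse>)\<^sup>*"

lemma dsc_sourcesE:
  assumes "v \<in> src"
  obtains (vertical) i j where "i \<in> {1..n}" "j \<in> idx_I m S i" "v = Uij i j"
    | (start) l where "l \<in> {1..k}" "v = Zl l"
  using assms unfolding dsc_sources_def by blast

lemma canonical_walk_Zl:
  assumes "Zl l \<in> src"
  obtains (horizontal) t where "t \<in> {1..m}" "\<pi>' (Zl l) = Zl l # horiz_path S t"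
    | (direct) "\<pi>' (Zl l) = [Zl l, Zc]"
proof (cases "2 < length (\<pi> (Zl l))")
  case True
  show thesis
  proof (cases "\<pi> (Zl l) ! 2")
    case (Vij x t)
    have "set (\<pi> (Zl l)) \<subseteq> V" using is_walk_source[OF assms] unfolding is_walk_def by blast
    then have "Vij x t \<in> V" using True Vij by (metis nth_mem subsetD)
    then have "t \<in> {1..m}" unfolding dsc_verts_def idx_I_def by auto
    then show thesis using horizontal True Vij by (simp add: canonical_walks_def)
  qed (use True direct in \<open>simp_all add: canonical_walks_def\<close>)
next
  case False
  then show thesis using direct by (simp add: canonical_walks_def)
qed

lemma horiz_path_subset: "t \<in> {1..m} \<Longrightarrow> set (horiz_path S t) \<subseteq> V"
proof -
  assume t: "t \<in> {1..m}"
  have "Vij a t \<in> V" if "a \<in> S t" for a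
  proof -
    have "a \<in> {1..n}" using S_sub t that by blast
    moreover have "t \<in> idx_I m S a" using t that unfolding idx_I_def by simp
    ultimately show ?thesis using vert_path_subset by (auto simp: vert_path_def)
  qed
  moreover have "Zc \<in> V" by (simp add: dsc_verts_def)
  ultimately show ?thesis using set_horiz_path[of S t, OF finite_S[OF t]] by auto
qed

lemma is_walk_canonical: "v \<in> src \<Longrightarrow> is_walk V A (\<pi>' v) \<and> hd (\<pi>' v) = v"
proof (elim dsc_sourcesE)
  fix i j assume ij: "i \<in> {1..n}" "j \<in> idx_I m S i" and v: "v = Uij i j"
  have "walk_arcs (vert_path i j) \<subseteq> A" using ij unfolding dsc_arcs_def by blast
  with vert_path_subset[OF ij] show ?thesis
    unfolding is_walk_iff v by (simp add: vert_path_def)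
next
  fix l assume l: "l \<in> {1..k}" and v: "v = Zl l"
  then have src: "Zl l \<in> src" and arc: "(Zl l, Zc) \<in> A" and V: "Zl l \<in> V" "Zc \<in> V"
    unfolding dsc_sources_def dsc_arcs_def dsc_verts_def by auto
  show ?thesis
    using src
  proof (cases rule: canonical_walk_Zl)
    case (horizontal t)
    have "walk_arcs (horiz_path S t) \<subseteq> A" using horizontal(1) unfolding dsc_arcs_def by blast
    moreover have "horiz_path S t \<noteq> []" "hd (horiz_path S t) = Zc" by (simp_all add: horiz_path_def)
    ultimately show ?thesis
      using horizontal arc V horiz_path_subset[OF horizontal(1)] unfolding is_walk_iff v
      by (simp add: walk_arcs_Cons)
  next
    case direct
    then show ?thesis using arc V unfolding is_walk_iff v by (simp add: walk_arcs_def)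
  qed
qed

lemma distinct_canonical_walk:
  assumes v: "v \<in> src"
  shows "distinct (\<pi>' v)"
  using v
proof (cases rule: dsc_sourcesE)
  case (start l)
  with v have "Zl l \<in> src" by simp
  then show ?thesis
    unfolding \<open>v = Zl l\<close>
    by (cases rule: canonical_walk_Zl) (auto simp: horiz_path_def distinct_map inj_on_def)
qed (simp add: vert_path_def)

lemma Zc_in_canonical_walk:
  assumes "Zl l \<in> src"
  shows "Zc \<in> set (\<pi>' (Zl l))"
  using assms by (cases rule: canonical_walk_Zl) (simp_all add: horiz_path_def)

lemma canonical_walk_reach:
  assumes v: "v \<in> src" and x: "x \<in> set (\<pi>' v)"
  shows "x \<in> H_verts V B (canonical_walks S W)" "(v, x) \<in> E'"
proof -
  have v_V: "v \<in> V" "0 < B v" using v sources_subset by (auto simp: less_B_iff)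
  show "x \<in> H_verts V B (canonical_walks S W)"
    using set_subset_H_verts[of v V 0 B "canonical_walks S W", OF v_V] x by blast
  have "\<pi>' v \<noteq> []" "hd (\<pi>' v) = v" using is_walk_canonical[OF v] unfolding is_walk_def by auto
  then have "(v, x) \<in> (walk_arcs (\<pi>' v))\<^sup>*" using rtrancl_walk_arcs_hd[of "\<pi>' v" x] x by simp
  moreover have "(walk_arcs (\<pi>' v))\<^sup>* \<subseteq> E'"
    using walk_arcs_subset_H_arcs[of v V 0 B "canonical_walks S W", OF v_V] by (intro rtrancl_mono) blast
  ultimately show "(v, x) \<in> E'" by blast
qed

lemma used_horiz_canonical:
  assumes "used_horiz t"
  obtains l where "Zl l \<in> src" "\<pi>' (Zl l) = Zl l # horiz_path S t"
proof -
  obtain l where l: "Zl l \<in> src" "2 < length (\<pi> (Zl l))" "\<pi> (Zl l) ! 2 = horiz_path S t ! 1"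
    using assms by (rule used_horiz_start)
  have t: "t \<in> {1..m}" "Suc 0 < length (horiz_path S t)" using assms unfolding used_horiz_def by auto
  obtain a where "horiz_path S t ! 1 = Vij a t" using horiz_path_nth_Suc[OF t] by auto
  with l that show thesis by (simp add: canonical_walks_def)
qed

lemma hub_reaches_source:
  assumes v: "v \<in> src"
  shows "(Zc, v) \<in> E'"
  using v
proof (cases rule: dsc_sourcesE)
  case (start l)
  with v have "(Zl l, Zc) \<in> E'"
    using canonical_walk_reach(2) Zc_in_canonical_walk by simp
  then show ?thesis unfolding start(2) by (rule sym_closure_rtrancl_swap)
next
  case (vertical i j)
  obtain t where t: "used_horiz t" "i \<in> S t"
    using every_element_covered[OF vertical(1)] unfolding covered_def by blast
  then have t_m: "t \<in> {1..m}" and t_idx: "t \<in> idx_I m S i"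
    unfolding used_horiz_def idx_I_def by auto
  obtain l where l: "Zl l \<in> src" "\<pi>' (Zl l) = Zl l # horiz_path S t"
    using t(1) by (rule used_horiz_canonical)
  have "Vij i t \<in> set (\<pi>' (Zl l))"
    using l(2) t(2) finite_S[OF t_m] by (simp add: horiz_path_def)
  have src: "Uij i t \<in> src" "Uij i j \<in> src" using vertical t_idx by (auto simp: src_Uij)
  have "(Zc, Zl l) \<in> E'"
    using canonical_walk_reach(2)[OF l(1) Zc_in_canonical_walk[OF l(1)]] by (rule sym_closure_rtrancl_swap)
  also have "(Zl l, Vij i t) \<in> E'"
    using canonical_walk_reach(2)[OF l(1) \<open>Vij i t \<in> set (\<pi>' (Zl l))\<close>] .
  also have "(Vij i t, Uij i t) \<in> E'"
    using canonical_walk_reach(2)[OF src(1), of "Vij i t"] sym_closure_rtrancl_swap by (simp add: vert_path_def)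
  also have "(Uij i t, Ui i) \<in> E'"
    using canonical_walk_reach(2)[OF src(1), of "Ui i"] by (simp add: vert_path_def)
  also have "(Ui i, Uij i j) \<in> E'"
    using canonical_walk_reach(2)[OF src(2), of "Ui i"] sym_closure_rtrancl_swap by (simp add: vert_path_def)
  finally show ?thesis unfolding vertical(3) .
qed

lemma vertex_on_canonical_walk:
  assumes "x \<in> V"
  obtains v where "v \<in> src" "x \<in> set (\<pi>' v)"
proof -
  have "\<exists>v\<in>src. x \<in> set (\<pi>' v)"
    using assms unfolding dsc_verts_def
  proof (elim UnE)
    assume "x \<in> Ui ` {1..n}"
    then obtain i where i: "i \<in> {1..n}" "x = Ui i" by blast
    obtain t where "used_horiz t" "i \<in> S t"
      using every_element_covered[OF i(1)] unfolding covered_def by blast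
    then have "Uij i t \<in> src" using i(1) by (auto simp: src_Uij used_horiz_def idx_I_def)
    then show ?thesis using i(2) by (force simp: vert_path_def)
  next
    assume "x \<in> {Zc}"
    obtain v p where "v \<in> src" "p < length (\<pi> v)" "\<pi> v ! p = Zc"
      using vertex_on_walk[of Zc] by (auto simp: dsc_verts_def)
    then obtain l where "Zl l \<in> src" using walk_index_Zc by blast
    then show ?thesis using \<open>x \<in> {Zc}\<close> Zc_in_canonical_walk by blast
  next
    assume "x \<in> (\<Union>i\<in>{1..n}. \<Union>j\<in>idx_I m S i. {Uij i j, Uij' i j, Vij i j, Vij' i j})"
    then obtain i j where "i \<in> {1..n}" "j \<in> idx_I m S i" "x \<in> set (vert_path i j)"
      by (auto simp: vert_path_def)
    then have "Uij i j \<in> src" "x \<in> set (\<pi>' (Uij i j))" by (simp_all add: src_Uij)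
    then show ?thesis by blast
  next
    assume "x \<in> Zl ` {1..k}"
    then obtain l where "l \<in> {1..k}" "x = Zl l" by blast
    then show ?thesis by (force simp: dsc_sources_def canonical_walks_def)
  qed
  with that show thesis by blast
qed

lemma canonical_solution: "st_solution V A dsc_F B (canonical_walks S W)"
proof (rule st_solutionI_hub)
  show "\<forall>v\<in>V. \<forall>r<B v. is_walk V A (canonical_walks S W v r) \<and> hd (canonical_walks S W v r) = v"
  proof (intro ballI allI impI)
    fix v r assume "v \<in> V" "r < B v"
    then have "v \<in> src" "r = 0" by (simp_all add: less_B_iff)
    then show "is_walk V A (canonical_walks S W v r) \<and> hd (canonical_walks S W v r) = v"
      using is_walk_canonical by simp
  qed
next
  fix x assume "x \<in> V"
  then obtain v where v: "v \<in> src" "x \<in> set (\<pi>' v)" by (rule vertex_on_canonical_walk)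
  show "x \<in> H_verts V B (canonical_walks S W) \<and> (Zc, x) \<in> E'"
    using canonical_walk_reach(1)[OF v]
      rtrancl_trans[OF hub_reaches_source[OF v(1)] canonical_walk_reach(2)[OF v]]
    by (rule conjI)
qed

end

theorem lemma6:
  fixes n m k :: nat and S :: "nat \<Rightarrow> nat set"
  assumes S_sub: "\<forall>t\<in>{1..m}. S t \<subseteq> {1..n}"
    and S_cover: "(\<Union>t\<in>{1..m}. S t) = {1..n}"
    and k_ge: "1 \<le> k" and k_le: "k \<le> m"
    and pos: "\<exists>W. st_solution (dsc_verts n m S k) (dsc_arcs n m S k) dsc_F (dsc_B n m S k) W"
  shows "\<exists>W. st_solution (dsc_verts n m S k) (dsc_arcs n m S k) dsc_F (dsc_B n m S k) W \<and>
             (\<forall>v\<in>dsc_sources n m S k. distinct (W v 0)) \<and>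
             (\<forall>i\<in>{1..n}. \<forall>j\<in>idx_I m S i. set (W (Uij i j) 0) \<subseteq> comp_C m S i)"
proof -
  obtain W where "st_solution (dsc_verts n m S k) (dsc_arcs n m S k) dsc_F (dsc_B n m S k) W"
    using pos by blast
  with S_sub interpret dsc_solution n m k S W by unfold_locales
  have "\<forall>i\<in>{1..n}. \<forall>j\<in>idx_I m S i. set (\<pi>' (Uij i j)) \<subseteq> comp_C m S i"
    unfolding comp_C_def by auto
  then show ?thesis using canonical_solution distinct_canonical_walk by blast
qed

end
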